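(* Let $\mathbb{R}$ be a strict Reedy category and let $G$ be a crossed $\mathbb{R}$-group compatible with the Reedy structure of $\mathbb{R}$. Then there is a unique dualizable generalized Reedy structure on the total category $\mathbb{R}G$ for which the embedding $\mathbb{R}\hookrightarrow\mathbb{R}G$ is a morphism of generalized Reedy categories.
   Context: A strict Reedy category is a small category $\mathbb{R}$ with wide subcategories $\mathbb{R}^+,\mathbb{R}^-$ and degree $d:\mathrm{Ob}(\mathbb{R})\to\mathbb{N}$ such that non-identity morphisms of $\mathbb{R}^+$ (resp. $\mathbb{R}^-$) strictly raise (resp. lower) degree and every morphism factors uniquely as a morphism of $\mathbb{R}^-$ followed by one of $\mathbb{R}^+$. A generalized Reedy structure on a small category $\mathbb{C}$: wide subcategories $\mathbb{C}^+,\mathbb{C}^-$ and degree $d$ such that (i) non-invertible morphisms of $\mathbb{C}^+$ (resp. $\mathbb{C}^-$) strictly raise (resp. lower) degree, and isomorphisms preserve degree; (ii) $\mathbb{C}^+\cap\mathbb{C}^-=\mathrm{Iso}(\mathbb{C})$; (iii) every morphism $f$ factors as $f=gh$ with $g\in\mathbb{C}^+$, $h\in\mathbb{C}^-$, uniquely up to isomorphism; (iv) if $\theta f=f$ with $\theta$ an isomorphism and $f\in\mathbb{C}^-$ then $\theta$ is an identity. It is dualizable if moreover (iv)$'$: if $f\theta=f$ with $\theta$ an isomorphism and $f\in\mathbb{C}^+$ then $\theta$ is an identity. A morphism of generalized Reedy categories is a functor preserving $(-)^+$, $(-)^-$ and degree. A crossed $\mathbb{R}$-group $G$ is a set-valued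 presheaf on $\mathbb{R}$ (action of $\alpha:s\to r$ written $\alpha^*:G_r\to G_s$) with a group structure on each $G_r$ (neutral $e_r$) and left actions $g_*$ of $G_r$ on each $\mathrm{Hom}_{\mathbb{R}}(s,r)$, satisfying for $g,h\in G_r$, $\alpha:s\to r$, $\beta:t\to s$: $g_*(\alpha\beta)=g_*(\alpha)\circ\alpha^*(g)_*(\beta)$, $g_*(1_r)=1_r$, $\alpha^*(gh)=h_*(\alpha)^*(g)\cdot\alpha^*(h)$, $\alpha^*(e_r)=e_s$. The total category $\mathbb{R}G$ has the objects of $\mathbb{R}$, morphisms $r\to s$ pairs $(\alpha,g)$ with $\alpha:r\to s$ in $\mathbb{R}$, $g\in G_r$, composition $(\alpha,g)\circ(\beta,h)=(\alpha\cdot g_*(\beta),\beta^*(g)\cdot h)$; $\mathbb{R}\hookrightarrow\mathbb{R}G$ by $\alpha\mapsto(\alpha,e)$. $G$ is compatible with the Reedy structure if (i) for $\alpha:r\to s$ in $\mathbb{R}^{\pm}$ and $g\in G_s$, $g_*(\alpha)\in\mathbb{R}^{\pm}$; (ii) if $\alpha:r\to s$ is in $\mathbb{R}^-$ and $g\in G_s$ satisfies $\alpha^*(g)=e_r$ and $g_*(\alpha)=\alpha$, then $g=e_s$. *)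

theory Defs
  imports "HOL-Algebra.Group"
begin

record ('o, 'm) cat =
  c_obj  :: "'o set"
  c_arr  :: "'m set"
  c_dom  :: "'m \<Rightarrow> 'o"
  c_cod  :: "'m \<Rightarrow> 'o"
  c_id   :: "'o \<Rightarrow> 'm"
  c_comp :: "'m \<Rightarrow> 'm \<Rightarrow> 'm"   (* c_comp C g f = g \<circ> f *)

definition is_category :: "('o, 'm, 'x) cat_scheme \<Rightarrow> bool" where
  "is_category C \<longleftrightarrow>
     (\<forall>f\<in>c_arr C. c_dom C f \<in> c_obj C \<and> c_cod C f \<in> c_obj C) \<and>
     (\<forall>x\<in>c_obj C. c_id C x \<in> c_arr C \<and> c_dom C (c_id C x) = x \<and> c_cod C (c_id C x) = x) \<and>
     (\<forall>f\<in>c_arr C. \<forall>g\<in>c_arr C. c_dom C g = c_cod C f \<longrightarrow>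
        c_comp C g f \<in> c_arr C \<and> c_dom C (c_comp C g f) = c_dom C f \<and>
        c_cod C (c_comp C g f) = c_cod C g) \<and>
     (\<forall>f\<in>c_arr C. c_comp C (c_id C (c_cod C f)) f = f \<and> c_comp C f (c_id C (c_dom C f)) = f) \<and>
     (\<forall>f\<in>c_arr C. \<forall>g\<in>c_arr C. \<forall>h\<in>c_arr C.
        c_dom C g = c_cod C f \<longrightarrow> c_dom C h = c_cod C g \<longrightarrow>
        c_comp C h (c_comp C g f) = c_comp C (c_comp C h g) f)"

definition hom :: "('o, 'm, 'x) cat_scheme \<Rightarrow> 'o \<Rightarrow> 'o \<Rightarrow> 'm set" where
  "hom C x y = {f \<in> c_arr C. c_dom C f = x \<and> c_cod C f = y}"

definition cat_iso :: "('o, 'm, 'x) cat_scheme \<Rightarrow> 'm \<Rightarrow> bool" where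
  "cat_iso C f \<longleftrightarrow> f \<in> c_arr C \<and>
     (\<exists>g\<in>c_arr C. c_dom C g = c_cod C f \<and> c_cod C g = c_dom C f \<and>
        c_comp C g f = c_id C (c_dom C f) \<and> c_comp C f g = c_id C (c_cod C f))"

definition wide_subcat :: "('o, 'm, 'x) cat_scheme \<Rightarrow> 'm set \<Rightarrow> bool" where
  "wide_subcat C S \<longleftrightarrow> S \<subseteq> c_arr C \<and> (\<forall>x\<in>c_obj C. c_id C x \<in> S) \<and>
     (\<forall>f\<in>S. \<forall>g\<in>S. c_dom C g = c_cod C f \<longrightarrow> c_comp C g f \<in> S)"

definition is_functor ::
  "('o, 'm, 'x) cat_scheme \<Rightarrow> ('p, 'n, 'y) cat_scheme \<Rightarrow> ('o \<Rightarrow> 'p) \<Rightarrow> ('m \<Rightarrow> 'n) \<Rightarrow> bool" where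
  "is_functor C D Fo Fm \<longleftrightarrow>
     (\<forall>x\<in>c_obj C. Fo x \<in> c_obj D) \<and>
     (\<forall>f\<in>c_arr C. Fm f \<in> c_arr D \<and> c_dom D (Fm f) = Fo (c_dom C f) \<and> c_cod D (Fm f) = Fo (c_cod C f)) \<and>
     (\<forall>x\<in>c_obj C. Fm (c_id C x) = c_id D (Fo x)) \<and>
     (\<forall>f\<in>c_arr C. \<forall>g\<in>c_arr C. c_dom C g = c_cod C f \<longrightarrow> Fm (c_comp C g f) = c_comp D (Fm g) (Fm f))"

text \<open>Strict Reedy category: P = R^+, M = R^-, degree d.\<close>
definition strict_reedy :: "('o, 'm, 'x) cat_scheme \<Rightarrow> 'm set \<Rightarrow> 'm set \<Rightarrow> ('o \<Rightarrow> nat) \<Rightarrow> bool" where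
  "strict_reedy C P M d \<longleftrightarrow> is_category C \<and> wide_subcat C P \<and> wide_subcat C M \<and>
     (\<forall>f\<in>P. f \<noteq> c_id C (c_dom C f) \<longrightarrow> d (c_dom C f) < d (c_cod C f)) \<and>
     (\<forall>f\<in>M. f \<noteq> c_id C (c_dom C f) \<longrightarrow> d (c_cod C f) < d (c_dom C f)) \<and>
     (\<forall>f\<in>c_arr C. \<exists>!hg. fst hg \<in> M \<and> snd hg \<in> P \<and> c_dom C (snd hg) = c_cod C (fst hg) \<and>
                          c_comp C (snd hg) (fst hg) = f)"

text \<open>Generalized Reedy structure: P = C^+, M = C^-, degree d.\<close>
definition gen_reedy :: "('o, 'm, 'x) cat_scheme \<Rightarrow> 'm set \<Rightarrow> 'm set \<Rightarrow> ('o \<Rightarrow> nat) \<Rightarrow> bool" where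
  "gen_reedy C P M d \<longleftrightarrow> is_category C \<and> wide_subcat C P \<and> wide_subcat C M \<and>
     \<comment> \<open>(i)\<close>
     (\<forall>f\<in>P. \<not> cat_iso C f \<longrightarrow> d (c_dom C f) < d (c_cod C f)) \<and>
     (\<forall>f\<in>M. \<not> cat_iso C f \<longrightarrow> d (c_cod C f) < d (c_dom C f)) \<and>
     (\<forall>f. cat_iso C f \<longrightarrow> d (c_dom C f) = d (c_cod C f)) \<and>
     \<comment> \<open>(ii)\<close>
     P \<inter> M = {f. cat_iso C f} \<and>
     \<comment> \<open>(iii) existence of factorization\<close>
     (\<forall>f\<in>c_arr C. \<exists>g h. g \<in> P \<and> h \<in> M \<and> c_dom C g = c_cod C h \<and> c_comp C g h = f) \<and>
     \<comment> \<open>(iii) uniqueness up to (a unique-compatible) isomorphism\<close>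
     (\<forall>g h g' h'. g \<in> P \<longrightarrow> h \<in> M \<longrightarrow> g' \<in> P \<longrightarrow> h' \<in> M \<longrightarrow>
        c_dom C g = c_cod C h \<longrightarrow> c_dom C g' = c_cod C h' \<longrightarrow> c_comp C g h = c_comp C g' h' \<longrightarrow>
        (\<exists>\<theta>. cat_iso C \<theta> \<and> c_dom C \<theta> = c_cod C h \<and> c_cod C \<theta> = c_cod C h' \<and>
             c_comp C \<theta> h = h' \<and> c_comp C g' \<theta> = g)) \<and>
     \<comment> \<open>(iv)\<close>
     (\<forall>\<theta> f. cat_iso C \<theta> \<longrightarrow> f \<in> M \<longrightarrow> c_dom C \<theta> = c_cod C f \<longrightarrow> c_comp C \<theta> f = f \<longrightarrow>
        \<theta> = c_id C (c_dom C \<theta>))"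

definition dualizable_gen_reedy :: "('o, 'm, 'x) cat_scheme \<Rightarrow> 'm set \<Rightarrow> 'm set \<Rightarrow> ('o \<Rightarrow> nat) \<Rightarrow> bool" where
  "dualizable_gen_reedy C P M d \<longleftrightarrow> gen_reedy C P M d \<and>
     (\<forall>\<theta> f. cat_iso C \<theta> \<longrightarrow> f \<in> P \<longrightarrow> c_cod C \<theta> = c_dom C f \<longrightarrow> c_comp C f \<theta> = f \<longrightarrow>
        \<theta> = c_id C (c_dom C \<theta>))"

definition reedy_morphism ::
  "('o, 'm, 'x) cat_scheme \<Rightarrow> 'm set \<Rightarrow> 'm set \<Rightarrow> ('o \<Rightarrow> nat) \<Rightarrow>
   ('p, 'n, 'y) cat_scheme \<Rightarrow> 'n set \<Rightarrow> 'n set \<Rightarrow> ('p \<Rightarrow> nat) \<Rightarrow>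
   ('o \<Rightarrow> 'p) \<Rightarrow> ('m \<Rightarrow> 'n) \<Rightarrow> bool" where
  "reedy_morphism C P M d D P' M' d' Fo Fm \<longleftrightarrow> is_functor C D Fo Fm \<and>
     Fm ` P \<subseteq> P' \<and> Fm ` M \<subseteq> M' \<and> (\<forall>x\<in>c_obj C. d' (Fo x) = d x)"

text \<open>G r is the group G_r; res a is a^*; act g a is g_*(a).\<close>
definition crossed_group ::
  "('o, 'm, 'x) cat_scheme \<Rightarrow> ('o \<Rightarrow> 'g monoid) \<Rightarrow> ('m \<Rightarrow> 'g \<Rightarrow> 'g) \<Rightarrow> ('g \<Rightarrow> 'm \<Rightarrow> 'm) \<Rightarrow> bool" where
  "crossed_group C G res act \<longleftrightarrow>
     (\<forall>r\<in>c_obj C. group (G r)) \<and>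
     \<comment> \<open>presheaf\<close>
     (\<forall>a\<in>c_arr C. \<forall>g\<in>carrier (G (c_cod C a)). res a g \<in> carrier (G (c_dom C a))) \<and>
     (\<forall>r\<in>c_obj C. \<forall>g\<in>carrier (G r). res (c_id C r) g = g) \<and>
     (\<forall>a\<in>c_arr C. \<forall>b\<in>c_arr C. c_dom C a = c_cod C b \<longrightarrow>
        (\<forall>g\<in>carrier (G (c_cod C a)). res (c_comp C a b) g = res b (res a g))) \<and>
     \<comment> \<open>left actions of G_r on Hom(s,r)\<close>
     (\<forall>r\<in>c_obj C. \<forall>s\<in>c_obj C.
        (\<forall>g\<in>carrier (G r). \<forall>a\<in>hom C s r. act g a \<in> hom C s r) \<and>
        (\<forall>a\<in>hom C s r. act \<one>\<^bsub>G r\<^esub> a = a) \<and>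
        (\<forall>g\<in>carrier (G r). \<forall>h\<in>carrier (G r). \<forall>a\<in>hom C s r.
           act (g \<otimes>\<^bsub>G r\<^esub> h) a = act g (act h a))) \<and>
     \<comment> \<open>crossed group axioms\<close>
     (\<forall>a\<in>c_arr C. \<forall>b\<in>c_arr C. c_dom C a = c_cod C b \<longrightarrow>
        (\<forall>g\<in>carrier (G (c_cod C a)). act g (c_comp C a b) = c_comp C (act g a) (act (res a g) b))) \<and>
     (\<forall>r\<in>c_obj C. \<forall>g\<in>carrier (G r). act g (c_id C r) = c_id C r) \<and>
     (\<forall>a\<in>c_arr C. \<forall>g\<in>carrier (G (c_cod C a)). \<forall>h\<in>carrier (G (c_cod C a)).
        res a (g \<otimes>\<^bsub>G (c_cod C a)\<^esub> h) = res (act h a) g \<otimes>\<^bsub>G (c_dom C a)\<^esub> res a h) \<and>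
     (\<forall>a\<in>c_arr C. res a \<one>\<^bsub>G (c_cod C a)\<^esub> = \<one>\<^bsub>G (c_dom C a)\<^esub>)"

definition total_cat ::
  "('o, 'm, 'x) cat_scheme \<Rightarrow> ('o \<Rightarrow> 'g monoid) \<Rightarrow> ('m \<Rightarrow> 'g \<Rightarrow> 'g) \<Rightarrow> ('g \<Rightarrow> 'm \<Rightarrow> 'm) \<Rightarrow> ('o, 'm \<times> 'g) cat" where
  "total_cat C G res act =
     \<lparr> c_obj = c_obj C,
       c_arr = {(a, g). a \<in> c_arr C \<and> g \<in> carrier (G (c_dom C a))},
       c_dom = (\<lambda>(a, g). c_dom C a),
       c_cod = (\<lambda>(a, g). c_cod C a),
       c_id = (\<lambda>r. (c_id C r, \<one>\<^bsub>G r\<^esub>)),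
       c_comp = (\<lambda>(a, g) (b, h). (c_comp C a (act g b), res b g \<otimes>\<^bsub>G (c_dom C b)\<^esub> h)) \<rparr>"

definition total_embed :: "('o, 'm, 'x) cat_scheme \<Rightarrow> ('o \<Rightarrow> 'g monoid) \<Rightarrow> 'm \<Rightarrow> 'm \<times> 'g" where
  "total_embed C G a = (a, \<one>\<^bsub>G (c_dom C a)\<^esub>)"

definition reedy_compatible ::
  "('o, 'm, 'x) cat_scheme \<Rightarrow> 'm set \<Rightarrow> 'm set \<Rightarrow>
   ('o \<Rightarrow> 'g monoid) \<Rightarrow> ('m \<Rightarrow> 'g \<Rightarrow> 'g) \<Rightarrow> ('g \<Rightarrow> 'm \<Rightarrow> 'm) \<Rightarrow> bool" where
  "reedy_compatible C P M G res act \<longleftrightarrow>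
     (\<forall>a\<in>P. \<forall>g\<in>carrier (G (c_cod C a)). act g a \<in> P) \<and>
     (\<forall>a\<in>M. \<forall>g\<in>carrier (G (c_cod C a)). act g a \<in> M) \<and>
     (\<forall>a\<in>M. \<forall>g\<in>carrier (G (c_cod C a)).
        res a g = \<one>\<^bsub>G (c_dom C a)\<^esub> \<longrightarrow> act g a = a \<longrightarrow> g = \<one>\<^bsub>G (c_cod C a)\<^esub>)"

end

theory Submission
  imports Defs
begin

text \<open>The generalized Reedy structure on \<open>RG\<close> is the evident one: \<open>(RG)\<^sup>\<plusminus>\<close> consists of the
  pairs \<open>(\<alpha>, g)\<close> with \<open>\<alpha> \<in> R\<^sup>\<plusminus>\<close>, and degrees are those of \<open>R\<close>. Compatibility makes these
  classes closed under composition. A pair \<open>(\<alpha>, g)\<close> is invertible exactly when \<open>\<alpha>\<close> is an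
  identity, because in a strict Reedy category a retraction lies in \<open>R\<^sup>-\<close> and its section
  in \<open>R\<^sup>+\<close>. Writing \<open>\<alpha> = p m\<close>, the factorization \<open>(\<alpha>, g) = (p, 1) (m, g)\<close> is unique up to
  an isomorphism \<open>(1, k)\<close>, and the second compatibility condition is exactly axiom (iv).
  Conversely, any admissible structure contains \<open>(RG)\<^sup>\<plusminus>\<close>, since
  \<open>(\<alpha>, g) = (\<alpha>, 1) (1, g)\<close> composes an image of \<open>R\<close> with an isomorphism; and a generalized
  Reedy structure contained in another one coincides with it.\<close>

locale small_category =
  fixes C :: "('o, 'm, 'x) cat_scheme"
  assumes is_category: "is_category C"
begin

abbreviation "obj \<equiv> c_obj C"
abbreviation "arr \<equiv> c_arr C"
abbreviation "dm \<equiv> c_dom C"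
abbreviation "cd \<equiv> c_cod C"
abbreviation "ide \<equiv> c_id C"
abbreviation "cmp \<equiv> c_comp C"

lemma dom_in_obj [simp]: "f \<in> arr \<Longrightarrow> dm f \<in> obj"
  and cod_in_obj [simp]: "f \<in> arr \<Longrightarrow> cd f \<in> obj"
  and ide_in_arr [simp]: "x \<in> obj \<Longrightarrow> ide x \<in> arr"
  and dom_ide [simp]: "x \<in> obj \<Longrightarrow> dm (ide x) = x"
  and cod_ide [simp]: "x \<in> obj \<Longrightarrow> cd (ide x) = x"
  using is_category by (simp_all add: is_category_def)

lemma cmp_in_arr [simp]: "f \<in> arr \<Longrightarrow> g \<in> arr \<Longrightarrow> dm g = cd f \<Longrightarrow> cmp g f \<in> arr"
  and dom_cmp [simp]: "f \<in> arr \<Longrightarrow> g \<in> arr \<Longrightarrow> dm g = cd f \<Longrightarrow> dm (cmp g f) = dm f"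
  and cod_cmp [simp]: "f \<in> arr \<Longrightarrow> g \<in> arr \<Longrightarrow> dm g = cd f \<Longrightarrow> cd (cmp g f) = cd g"
  and cmp_ide_left [simp]: "f \<in> arr \<Longrightarrow> cmp (ide (cd f)) f = f"
  and cmp_ide_right [simp]: "f \<in> arr \<Longrightarrow> cmp f (ide (dm f)) = f"
  using is_category unfolding is_category_def by blast+

lemma cmp_ide_ide [simp]: "x \<in> obj \<Longrightarrow> cmp (ide x) (ide x) = ide x"
  using cmp_ide_left[OF ide_in_arr] by simp

lemma cmp_assoc:
  "f \<in> arr \<Longrightarrow> g \<in> arr \<Longrightarrow> h \<in> arr \<Longrightarrow> dm g = cd f \<Longrightarrow> dm h = cd g \<Longrightarrow>
    cmp h (cmp g f) = cmp (cmp h g) f"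
  using is_category unfolding is_category_def by blast

lemma iso_in_arr: "cat_iso C f \<Longrightarrow> f \<in> arr"
  by (simp add: cat_iso_def)

lemma ide_if_cod_eq_dom: "f \<in> arr \<Longrightarrow> f = ide (dm f) \<Longrightarrow> cd f = dm f"
  by (metis cod_ide dom_in_obj)

lemma retraction_of_degree_raising_is_ide:
  fixes e :: "'o \<Rightarrow> int"
  assumes p: "p \<in> arr" and q: "q \<in> arr" and pq: "dm p = cd q" and retr: "cmp p q = ide (cd p)"
    and raise_p: "p \<noteq> ide (dm p) \<Longrightarrow> e (dm p) < e (cd p)"
    and raise_q: "q \<noteq> ide (dm q) \<Longrightarrow> e (dm q) < e (cd q)"
  shows "p = ide (dm p) \<and> q = ide (dm q)"
proof (cases "q = ide (dm q)")
  case True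
  then have "cmp p q = p"
    using pq p q by (metis cmp_ide_right ide_if_cod_eq_dom)
  then show ?thesis
    using True retr p by (metis cod_in_obj dom_ide)
next
  case False
  have "dm q = cd p"
    using dom_cmp[OF q p pq] retr p by simp
  then have "p = ide (dm p)"
    using raise_p raise_q[OF False] pq by fastforce
  then show ?thesis
    using retr pq q by (metis \<open>dm q = cd p\<close> cmp_ide_left)
qed

end

text \<open>Two generalized Reedy structures on the same category, one contained in the
  other, coincide: factor a morphism of the larger class \<open>P'\<close> with respect to the
  smaller structure and compare with its trivial factorization; uniqueness forces the
  \<open>M\<close>-part to be an isomorphism, hence in \<open>P\<close>.\<close>
lemma gen_reedy_eq_if_subset:
  assumes reedy: "gen_reedy C P M d" and reedy': "gen_reedy C P' M' d'"
    and "P \<subseteq> P'" and "M \<subseteq> M'"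
  shows "P' = P \<and> M' = M"
proof -
  interpret small_category C
    using reedy by unfold_locales (simp add: gen_reedy_def)
  have wide: "wide_subcat C P" "wide_subcat C M" "wide_subcat C P'" "wide_subcat C M'"
    and iso: "P \<inter> M = {f. cat_iso C f}"
    and factor: "\<forall>f\<in>arr. \<exists>g h. g \<in> P \<and> h \<in> M \<and> dm g = cd h \<and> cmp g h = f"
    using reedy reedy' by (simp_all add: gen_reedy_def)
  have unique': "\<And>g h g' h'. g \<in> P' \<Longrightarrow> h \<in> M' \<Longrightarrow> g' \<in> P' \<Longrightarrow> h' \<in> M' \<Longrightarrow>
      dm g = cd h \<Longrightarrow> dm g' = cd h' \<Longrightarrow> cmp g h = cmp g' h' \<Longrightarrow>
      \<exists>\<theta>. cat_iso C \<theta> \<and> dm \<theta> = cd h \<and> cd \<theta> = cd h' \<and> cmp \<theta> h = h' \<and> cmp g' \<theta> = g"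
    using reedy' unfolding gen_reedy_def by blast
  have P_cmp: "\<And>f g. f \<in> P \<Longrightarrow> g \<in> P \<Longrightarrow> dm g = cd f \<Longrightarrow> cmp g f \<in> P"
    and M_cmp: "\<And>f g. f \<in> M \<Longrightarrow> g \<in> M \<Longrightarrow> dm g = cd f \<Longrightarrow> cmp g f \<in> M"
    and P'_arr: "P' \<subseteq> arr" and M'_arr: "M' \<subseteq> arr"
    and ide_P': "\<And>x. x \<in> obj \<Longrightarrow> ide x \<in> P'"
    and ide_M': "\<And>x. x \<in> obj \<Longrightarrow> ide x \<in> M'"
    using wide by (simp_all add: wide_subcat_def)
  have "P' \<subseteq> P"
  proof
    fix f assume f: "f \<in> P'"
    then have f_arr: "f \<in> arr" using P'_arr by blast
    then obtain g h where gh: "g \<in> P" "h \<in> M" "dm g = cd h" "cmp g h = f"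
      using factor by blast
    moreover have "cmp f (ide (dm f)) = cmp g h"
      using f_arr gh by simp
    ultimately obtain \<theta> where \<theta>: "cat_iso C \<theta>" "dm \<theta> = dm f" "cmp \<theta> (ide (dm f)) = h"
      using unique'[OF f ide_M'[of "dm f"], of g h] assms(3,4) f_arr by auto
    then have "h = \<theta>"
      using iso_in_arr by (metis cmp_ide_right)
    then have "h \<in> P" using iso \<theta>(1) by blast
    then show "f \<in> P" using P_cmp gh by blast
  qed
  moreover have "M' \<subseteq> M"
  proof
    fix f assume f: "f \<in> M'"
    then have f_arr: "f \<in> arr" using M'_arr by blast
    then obtain g h where gh: "g \<in> P" "h \<in> M" "dm g = cd h" "cmp g h = f"
      using factor by blast
    moreover have "cmp g h = cmp (ide (cd f)) f"
      using f_arr gh by simp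
    ultimately obtain \<theta> where \<theta>: "cat_iso C \<theta>" "cd \<theta> = cd f" "cmp (ide (cd f)) \<theta> = g"
      using unique'[of g h "ide (cd f)" f] ide_P' f assms(3,4) f_arr by auto
    then have "g = \<theta>"
      using iso_in_arr by (metis cmp_ide_left)
    then have "g \<in> M" using iso \<theta>(1) by blast
    then show "f \<in> M" using M_cmp gh by blast
  qed
  ultimately show ?thesis using assms(3,4) by blast
qed

locale strict_reedy_category =
  fixes R :: "('o, 'm, 'x) cat_scheme" and Rp Rm :: "'m set" and d :: "'o \<Rightarrow> nat"
  assumes strict_reedy: "strict_reedy R Rp Rm d"

sublocale strict_reedy_category \<subseteq> small_category R
  using strict_reedy by unfold_locales (simp add: strict_reedy_def)

context strict_reedy_category
begin

lemma Rp_in_arr: "f \<in> Rp \<Longrightarrow> f \<in> arr"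
  and Rm_in_arr: "f \<in> Rm \<Longrightarrow> f \<in> arr"
  and ide_in_Rp: "x \<in> obj \<Longrightarrow> ide x \<in> Rp"
  and ide_in_Rm: "x \<in> obj \<Longrightarrow> ide x \<in> Rm"
  and Rp_cmp: "f \<in> Rp \<Longrightarrow> g \<in> Rp \<Longrightarrow> dm g = cd f \<Longrightarrow> cmp g f \<in> Rp"
  and Rm_cmp: "f \<in> Rm \<Longrightarrow> g \<in> Rm \<Longrightarrow> dm g = cd f \<Longrightarrow> cmp g f \<in> Rm"
  using strict_reedy unfolding strict_reedy_def wide_subcat_def by blast+

lemma wide_subcat_Rp: "wide_subcat R Rp"
  and wide_subcat_Rm: "wide_subcat R Rm"
  using strict_reedy by (simp_all add: strict_reedy_def)

lemma Rp_degree: "f \<in> Rp \<Longrightarrow> f \<noteq> ide (dm f) \<Longrightarrow> d (dm f) < d (cd f)"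
  and Rm_degree: "f \<in> Rm \<Longrightarrow> f \<noteq> ide (dm f) \<Longrightarrow> d (cd f) < d (dm f)"
  using strict_reedy by (auto simp: strict_reedy_def)

lemma factorization_exists:
  "f \<in> arr \<Longrightarrow> \<exists>m p. m \<in> Rm \<and> p \<in> Rp \<and> dm p = cd m \<and> cmp p m = f"
  using strict_reedy unfolding strict_reedy_def by (metis fst_conv snd_conv)

lemma factorization_unique:
  assumes "m \<in> Rm" "p \<in> Rp" "dm p = cd m" "m' \<in> Rm" "p' \<in> Rp" "dm p' = cd m'"
    and "cmp p m = cmp p' m'"
  shows "m = m' \<and> p = p'"
proof -
  have "cmp p m \<in> arr" using assms Rm_in_arr Rp_in_arr by simp
  then have "\<exists>!mp. fst mp \<in> Rm \<and> snd mp \<in> Rp \<and> dm (snd mp) = cd (fst mp) \<and>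
      cmp (snd mp) (fst mp) = cmp p m"
    using strict_reedy unfolding strict_reedy_def by blast
  then have "(m, p) = (m', p')" using assms by (metis fst_conv snd_conv)
  then show ?thesis by simp
qed

lemma Rp_Rm_is_ide: "f \<in> Rp \<Longrightarrow> f \<in> Rm \<Longrightarrow> f = ide (dm f)"
  using Rp_degree Rm_degree by fastforce

lemma factorization_of_ide:
  assumes "m \<in> Rm" "p \<in> Rp" "dm p = cd m" "cmp p m = ide x" "x \<in> obj"
  shows "p = ide x \<and> m = ide x"
proof -
  have "cmp p m = cmp (ide x) (ide x)"
    using assms(4,5) by simp
  then show ?thesis
    using factorization_unique[OF assms(1-3) ide_in_Rm[OF assms(5)] ide_in_Rp[OF assms(5)]] assms(5)
    by simp
qed

text \<open>Refactoring the middle part \<open>m p' = p'' m''\<close> turns the identity \<open>(p m) (p' m')\<close> into the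
  Reedy factorization \<open>(p p'') (m'' m')\<close>, which must be the trivial one.\<close>
lemma retraction_factorization:
  assumes mp: "m \<in> Rm" "p \<in> Rp" "dm p = cd m" and mp': "m' \<in> Rm" "p' \<in> Rp" "dm p' = cd m'"
    and mid: "dm m = cd p'" and retr: "cmp (cmp p m) (cmp p' m') = ide (cd p)"
  obtains m'' p'' where "m'' \<in> Rm" "p'' \<in> Rp" "dm p = cd p''" "dm m'' = cd m'"
    "cmp p p'' = ide (cd p)" "cmp m'' m' = ide (cd p)"
proof -
  have arrs: "m \<in> arr" "p \<in> arr" "m' \<in> arr" "p' \<in> arr"
    using mp mp' Rm_in_arr Rp_in_arr by auto
  obtain m'' p'' where mp'': "m'' \<in> Rm" "p'' \<in> Rp" "dm p'' = cd m''" "cmp p'' m'' = cmp m p'"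
    using factorization_exists[of "cmp m p'"] arrs mid by auto
  have arrs'': "m'' \<in> arr" "p'' \<in> arr"
    using mp'' Rm_in_arr Rp_in_arr by auto
  have dm_m'': "dm m'' = cd m'" and cd_p'': "dm p = cd p''"
    using mp'' arrs arrs'' mid mp(3) mp'(3) by (metis dom_cmp, metis cod_cmp)
  have "cmp (cmp p m) (cmp p' m') = cmp p (cmp m (cmp p' m'))"
    using cmp_assoc[of "cmp p' m'" m p] mp mp' mid arrs by simp
  also have "\<dots> = cmp p (cmp (cmp m p') m')"
    using cmp_assoc[of m' p' m] mp' mid arrs by simp
  also have "\<dots> = cmp p (cmp p'' (cmp m'' m'))"
    using cmp_assoc[of m' m'' p''] mp'' arrs arrs'' dm_m'' by simp
  also have "\<dots> = cmp (cmp p p'') (cmp m'' m')"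
    using cmp_assoc[of "cmp m'' m'" p'' p] mp'' arrs arrs'' dm_m'' cd_p'' by simp
  finally have "cmp (cmp p p'') (cmp m'' m') = ide (cd p)"
    using retr by simp
  then have "cmp p p'' = ide (cd p) \<and> cmp m'' m' = ide (cd p)"
    using factorization_of_ide[OF Rm_cmp[OF mp'(1) mp''(1) dm_m''] Rp_cmp[OF mp''(2) mp(2) cd_p'']]
      mp'' arrs arrs'' dm_m'' cd_p'' by auto
  then show thesis
    using that mp'' dm_m'' cd_p'' by blast
qed

lemma retraction_in_Rm_section_in_Rp:
  assumes a: "a \<in> arr" and b: "b \<in> arr" and ab: "dm a = cd b" and retr: "cmp a b = ide (cd a)"
  shows "a \<in> Rm \<and> b \<in> Rp"
proof -
  obtain m p where mp: "m \<in> Rm" "p \<in> Rp" "dm p = cd m" "cmp p m = a"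
    using factorization_exists[OF a] by blast
  obtain m' p' where mp': "m' \<in> Rm" "p' \<in> Rp" "dm p' = cd m'" "cmp p' m' = b"
    using factorization_exists[OF b] by blast
  have arrs: "m \<in> arr" "p \<in> arr" "m' \<in> arr" "p' \<in> arr"
    using mp mp' Rm_in_arr Rp_in_arr by auto
  have cd_p: "cd p = cd a" and mp'_comp: "dm m = cd p'"
    using mp mp' arrs ab by (metis cod_cmp, metis cod_cmp dom_cmp)
  then obtain m'' p'' where mp'': "m'' \<in> Rm" "p'' \<in> Rp" "dm p = cd p''" "dm m'' = cd m'"
      and ides: "cmp p p'' = ide (cd a)" "cmp m'' m' = ide (cd a)"
    using retraction_factorization[OF mp(1-3) mp'(1-3)] mp(4) mp'(4) retr by metis
  have arrs'': "m'' \<in> arr" "p'' \<in> arr"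
    using mp'' Rm_in_arr Rp_in_arr by auto
  have "cd (cmp m'' m') = cd a"
    using ides(2) a by simp
  then have cd_m'': "cd m'' = cd a"
    using arrs arrs'' mp''(4) by simp
  have "p = ide (dm p) \<and> p'' = ide (dm p'')"
    by (rule retraction_of_degree_raising_is_ide[where e = "\<lambda>x. int (d x)"])
      (fact arrs(2), fact arrs''(2), fact mp''(3), use ides(1) cd_p in simp,
       use Rp_degree[OF mp(2)] in simp, use Rp_degree[OF mp''(2)] in simp)
  then have "p = ide (cd m)"
    using mp(3) by metis
  then have "a = m"
    using mp(4) cmp_ide_left[OF arrs(1)] by simp
  moreover have "m'' = ide (dm m'') \<and> m' = ide (dm m')"
    by (rule retraction_of_degree_raising_is_ide[where e = "\<lambda>x. - int (d x)"])
      (fact arrs''(1), fact arrs(3), fact mp''(4), use ides(2) cd_m'' in simp,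
       use Rm_degree[OF mp''(1)] in simp, use Rm_degree[OF mp'(1)] in simp)
  then have "m' = ide (dm p')"
    using mp'(3) ide_if_cod_eq_dom[OF arrs(3)] by metis
  then have "b = p'"
    using mp'(4) cmp_ide_right[OF arrs(4)] by simp
  ultimately show ?thesis using mp mp' by simp
qed

end

locale compatible_crossed_group = strict_reedy_category R Rp Rm d
  for R :: "('o, 'm, 'x) cat_scheme" and Rp Rm :: "'m set" and d :: "'o \<Rightarrow> nat" +
  fixes G :: "'o \<Rightarrow> 'g monoid" and res :: "'m \<Rightarrow> 'g \<Rightarrow> 'g" and act :: "'g \<Rightarrow> 'm \<Rightarrow> 'm"
  assumes crossed_group: "crossed_group R G res act"
    and compatible: "reedy_compatible R Rp Rm G res act"
begin

lemma group_G: "r \<in> obj \<Longrightarrow> group (G r)"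
  using crossed_group by (simp add: crossed_group_def)

lemma one_closed [simp]: "r \<in> obj \<Longrightarrow> \<one>\<^bsub>G r\<^esub> \<in> carrier (G r)"
  using group_G by (simp add: group.is_monoid monoid.one_closed)

lemma one_mult [simp]: "r \<in> obj \<Longrightarrow> g \<in> carrier (G r) \<Longrightarrow> \<one>\<^bsub>G r\<^esub> \<otimes>\<^bsub>G r\<^esub> g = g"
  using group_G by (simp add: group.is_monoid monoid.l_one)

lemma res_closed: "a \<in> arr \<Longrightarrow> g \<in> carrier (G (cd a)) \<Longrightarrow> res a g \<in> carrier (G (dm a))"
  and res_ide: "r \<in> obj \<Longrightarrow> g \<in> carrier (G r) \<Longrightarrow> res (ide r) g = g"
  and res_cmp: "a \<in> arr \<Longrightarrow> b \<in> arr \<Longrightarrow> dm a = cd b \<Longrightarrow> g \<in> carrier (G (cd a)) \<Longrightarrow>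
    res (cmp a b) g = res b (res a g)"
  and act_cmp: "a \<in> arr \<Longrightarrow> b \<in> arr \<Longrightarrow> dm a = cd b \<Longrightarrow> g \<in> carrier (G (cd a)) \<Longrightarrow>
    act g (cmp a b) = cmp (act g a) (act (res a g) b)"
  and act_ide: "r \<in> obj \<Longrightarrow> g \<in> carrier (G r) \<Longrightarrow> act g (ide r) = ide r"
  and res_mult: "a \<in> arr \<Longrightarrow> g \<in> carrier (G (cd a)) \<Longrightarrow> h \<in> carrier (G (cd a)) \<Longrightarrow>
    res a (g \<otimes>\<^bsub>G (cd a)\<^esub> h) = res (act h a) g \<otimes>\<^bsub>G (dm a)\<^esub> res a h"
  and res_one: "a \<in> arr \<Longrightarrow> res a \<one>\<^bsub>G (cd a)\<^esub> = \<one>\<^bsub>G (dm a)\<^esub>"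
  using crossed_group by (simp_all add: crossed_group_def)

lemma act_hom_axioms:
  "r \<in> obj \<Longrightarrow> s \<in> obj \<Longrightarrow>
    (\<forall>g\<in>carrier (G r). \<forall>a\<in>hom R s r. act g a \<in> hom R s r) \<and>
    (\<forall>a\<in>hom R s r. act \<one>\<^bsub>G r\<^esub> a = a) \<and>
    (\<forall>g\<in>carrier (G r). \<forall>h\<in>carrier (G r). \<forall>a\<in>hom R s r.
       act (g \<otimes>\<^bsub>G r\<^esub> h) a = act g (act h a))"
  using crossed_group unfolding crossed_group_def by blast

lemma act_in_arr: "a \<in> arr \<Longrightarrow> g \<in> carrier (G (cd a)) \<Longrightarrow> act g a \<in> arr"
  and dom_act: "a \<in> arr \<Longrightarrow> g \<in> carrier (G (cd a)) \<Longrightarrow> dm (act g a) = dm a"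
  and cod_act: "a \<in> arr \<Longrightarrow> g \<in> carrier (G (cd a)) \<Longrightarrow> cd (act g a) = cd a"
  and act_one: "a \<in> arr \<Longrightarrow> act \<one>\<^bsub>G (cd a)\<^esub> a = a"
  and act_mult: "a \<in> arr \<Longrightarrow> g \<in> carrier (G (cd a)) \<Longrightarrow> h \<in> carrier (G (cd a)) \<Longrightarrow>
    act (g \<otimes>\<^bsub>G (cd a)\<^esub> h) a = act g (act h a)"
  using act_hom_axioms[of "cd a" "dm a"] by (simp_all add: hom_def)

lemma act_Rp: "a \<in> Rp \<Longrightarrow> g \<in> carrier (G (cd a)) \<Longrightarrow> act g a \<in> Rp"
  and act_Rm: "a \<in> Rm \<Longrightarrow> g \<in> carrier (G (cd a)) \<Longrightarrow> act g a \<in> Rm"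
  and Rm_stabilizer_trivial: "a \<in> Rm \<Longrightarrow> g \<in> carrier (G (cd a)) \<Longrightarrow>
    res a g = \<one>\<^bsub>G (dm a)\<^esub> \<Longrightarrow> act g a = a \<Longrightarrow> g = \<one>\<^bsub>G (cd a)\<^esub>"
  using compatible by (simp_all add: reedy_compatible_def)

lemma res_inv:
  assumes a: "a \<in> arr" and x: "x \<in> carrier (G (cd a))"
  shows "res (act x a) (inv\<^bsub>G (cd a)\<^esub> x) = inv\<^bsub>G (dm a)\<^esub> (res a x)"
proof -
  interpret cod: group "G (cd a)" using group_G a by simp
  interpret dom: group "G (dm a)" using group_G a by simp
  have "res (act x a) (inv\<^bsub>G (cd a)\<^esub> x) \<in> carrier (G (dm a))"
    using res_closed[OF act_in_arr[OF a x]] dom_act[OF a x] cod_act[OF a x] x by simp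
  moreover have "res (act x a) (inv\<^bsub>G (cd a)\<^esub> x) \<otimes>\<^bsub>G (dm a)\<^esub> res a x = \<one>\<^bsub>G (dm a)\<^esub>"
    using res_mult[OF a cod.inv_closed[OF x] x] res_one[OF a] x by simp
  ultimately show ?thesis
    using dom.inv_equality res_closed[OF a x] by simp
qed

abbreviation "T \<equiv> total_cat R G res act"

lemma total_obj [simp]: "c_obj T = obj"
  and total_arr [simp]: "(a, g) \<in> c_arr T \<longleftrightarrow> a \<in> arr \<and> g \<in> carrier (G (dm a))"
  and total_dom [simp]: "c_dom T (a, g) = dm a"
  and total_cod [simp]: "c_cod T (a, g) = cd a"
  and total_ide [simp]: "c_id T r = (ide r, \<one>\<^bsub>G r\<^esub>)"
  and total_cmp [simp]: "c_comp T (a, g) (b, h) = (cmp a (act g b), res b g \<otimes>\<^bsub>G (dm b)\<^esub> h)"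
  by (simp_all add: total_cat_def)

lemma total_cmp_assoc:
  assumes a: "a \<in> arr" "x \<in> carrier (G (dm a))" and b: "b \<in> arr" "y \<in> carrier (G (dm b))"
    and c: "c \<in> arr" "k \<in> carrier (G (dm c))" and ab: "dm a = cd b" and bc: "dm b = cd c"
  shows "c_comp T (a, x) (c_comp T (b, y) (c, k)) = c_comp T (c_comp T (a, x) (b, y)) (c, k)"
proof -
  interpret b_grp: group "G (dm b)" using group_G b by simp
  interpret c_grp: group "G (dm c)" using group_G c by simp
  let ?z = "res b x \<otimes>\<^bsub>G (dm b)\<^esub> y"
  have x_b: "x \<in> carrier (G (cd b))"
    using a ab by simp
  have rbx: "res b x \<in> carrier (G (dm b))"
    by (rule res_closed[OF b(1) x_b])
  have rbx_c: "res b x \<in> carrier (G (cd c))" and y_c: "y \<in> carrier (G (cd c))"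
    and z_c: "?z \<in> carrier (G (cd c))"
    using rbx b(2) b_grp.m_closed[OF rbx b(2)] unfolding bc .
  have yc: "act y c \<in> arr" "dm (act y c) = dm c" "cd (act y c) = cd c"
    using act_in_arr dom_act cod_act c(1) y_c by blast+
  have xb: "act x b \<in> arr" "dm (act x b) = dm b" "cd (act x b) = cd b"
    using act_in_arr dom_act cod_act b(1) x_b by blast+
  have "act x (cmp b (act y c)) = cmp (act x b) (act (res b x) (act y c))"
    by (rule act_cmp[OF b(1) yc(1) _ x_b]) (simp add: yc bc)
  also have "act (res b x) (act y c) = act ?z c"
    unfolding bc by (rule act_mult[OF c(1) rbx_c y_c, symmetric])
  finally have act_first: "act x (cmp b (act y c)) = cmp (act x b) (act ?z c)" .
  have res_first: "res (cmp b (act y c)) x = res (act y c) (res b x)"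
    by (rule res_cmp[OF b(1) yc(1) _ x_b]) (simp add: yc bc)
  have res_second: "res c ?z = res (act y c) (res b x) \<otimes>\<^bsub>G (dm c)\<^esub> res c y"
    unfolding bc by (rule res_mult[OF c(1) rbx_c y_c])
  have cmp_first: "cmp a (cmp (act x b) (act ?z c)) = cmp (cmp a (act x b)) (act ?z c)"
    by (rule cmp_assoc[OF act_in_arr[OF c(1) z_c] xb(1) a(1)])
      (simp_all add: xb cod_act[OF c(1) z_c, unfolded bc] ab bc)
  have dom_first: "dm (cmp b (act y c)) = dm c"
    using dom_cmp[OF yc(1) b(1)] yc bc by simp
  have "res (act y c) (res b x) \<in> carrier (G (dm c))" "res c y \<in> carrier (G (dm c))"
    using res_closed[OF yc(1)] res_closed[OF c(1) y_c] rbx_c yc by simp_all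
  then show ?thesis
    using act_first res_first res_second cmp_first dom_first c(2) by (simp add: c_grp.m_assoc)
qed

lemma total_cmp_in_arr:
  assumes a: "a \<in> arr" "x \<in> carrier (G (dm a))" and b: "b \<in> arr" "y \<in> carrier (G (dm b))"
    and ab: "dm a = cd b"
  shows "cmp a (act x b) \<in> arr" "dm (cmp a (act x b)) = dm b" "cd (cmp a (act x b)) = cd a"
    and "res b x \<otimes>\<^bsub>G (dm b)\<^esub> y \<in> carrier (G (dm b))"
proof -
  interpret b_grp: group "G (dm b)" using group_G b by simp
  have x_b: "x \<in> carrier (G (cd b))"
    using a ab by simp
  have "act x b \<in> arr" "dm (act x b) = dm b" "cd (act x b) = cd b"
    using act_in_arr dom_act cod_act b(1) x_b by blast+
  then show "cmp a (act x b) \<in> arr" "dm (cmp a (act x b)) = dm b" "cd (cmp a (act x b)) = cd a"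
    using a ab by simp_all
  show "res b x \<otimes>\<^bsub>G (dm b)\<^esub> y \<in> carrier (G (dm b))"
    using res_closed[OF b(1) x_b] b by simp
qed

lemma total_is_category: "is_category T"
  unfolding is_category_def
proof (intro conjI ballI impI)
  fix f assume "f \<in> c_arr T"
  then show "c_dom T f \<in> c_obj T" "c_cod T f \<in> c_obj T"
    by (auto simp: total_cat_def)
  obtain a g where f: "f = (a, g)" by force
  with \<open>f \<in> c_arr T\<close> have a: "a \<in> arr" "g \<in> carrier (G (dm a))" by auto
  interpret dom_grp: group "G (dm a)" using group_G a(1) by simp
  show "c_comp T (c_id T (c_cod T f)) f = f" "c_comp T f (c_id T (c_dom T f)) = f"
    using f a act_one[OF a(1)] res_one[OF a(1)] act_ide[OF _ a(2)] res_ide[OF _ a(2)] by simp_all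
next
  fix x assume "x \<in> c_obj T"
  then show "c_id T x \<in> c_arr T" "c_dom T (c_id T x) = x" "c_cod T (c_id T x) = x"
    by simp_all
next
  fix f g assume "f \<in> c_arr T" "g \<in> c_arr T" "c_dom T g = c_cod T f"
  moreover obtain b h where "f = (b, h)" by force
  moreover obtain a x where "g = (a, x)" by force
  ultimately show "c_comp T g f \<in> c_arr T" "c_dom T (c_comp T g f) = c_dom T f"
    "c_cod T (c_comp T g f) = c_cod T g"
    using total_cmp_in_arr by auto
next
  fix f g h assume "f \<in> c_arr T" "g \<in> c_arr T" "h \<in> c_arr T"
    "c_dom T g = c_cod T f" "c_dom T h = c_cod T g"
  moreover obtain c k where "f = (c, k)" by force
  moreover obtain b y where "g = (b, y)" by force
  moreover obtain a x where "h = (a, x)" by force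
  ultimately show "c_comp T h (c_comp T g f) = c_comp T (c_comp T h g) f"
    using total_cmp_assoc[of a x b y c k] by simp
qed

lemma total_iso_ide:
  assumes r: "r \<in> obj" and g: "g \<in> carrier (G r)"
  shows "cat_iso T (ide r, g)"
proof -
  interpret grp: group "G r" using group_G r by simp
  have inv: "inv\<^bsub>G r\<^esub> g \<in> carrier (G r)" using g by simp
  have "c_comp T (ide r, inv\<^bsub>G r\<^esub> g) (ide r, g) = c_id T r"
    and "c_comp T (ide r, g) (ide r, inv\<^bsub>G r\<^esub> g) = c_id T r"
    using r g inv act_ide res_ide by simp_all
  then show ?thesis
    unfolding cat_iso_def using r g inv by (intro conjI bexI[of _ "(ide r, inv\<^bsub>G r\<^esub> g)"]) simp_all
qed

text \<open>The inverse \<open>(b, h)\<close> of an isomorphism \<open>(a, g)\<close> exhibits \<open>a\<close> as a split epimorphism,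
  so \<open>a \<in> R\<^sup>-\<close>, and \<open>h\<^sub>*(a)\<close> as a split monomorphism, so \<open>h\<^sub>*(a) \<in> R\<^sup>+\<close>; since both have
  the same domain and codomain, degrees force \<open>a\<close> to be an identity.\<close>
lemma total_iso_imp_ide:
  assumes "cat_iso T (a, g)"
  shows "a \<in> arr \<and> a = ide (dm a) \<and> g \<in> carrier (G (dm a))"
proof -
  obtain f where f: "f \<in> c_arr T" "c_dom T f = cd a" "c_cod T f = dm a"
      "c_comp T f (a, g) = c_id T (dm a)" "c_comp T (a, g) f = c_id T (cd a)"
    and a: "a \<in> arr" "g \<in> carrier (G (dm a))"
    using assms unfolding cat_iso_def by auto
  obtain b h where f_eq: "f = (b, h)" by force
  have b: "b \<in> arr" "h \<in> carrier (G (dm b))" "dm b = cd a" "cd b = dm a"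
    using f f_eq by auto
  have g_b: "g \<in> carrier (G (cd b))" and h_a: "h \<in> carrier (G (cd a))"
    using a b by simp_all
  have "a \<in> Rm"
    using retraction_in_Rm_section_in_Rp[OF a(1) act_in_arr[OF b(1) g_b]] f(5) f_eq
      dom_act[OF b(1) g_b] cod_act[OF b(1) g_b] b by simp
  moreover have "act h a \<in> Rp"
    using retraction_in_Rm_section_in_Rp[OF b(1) act_in_arr[OF a(1) h_a]] f(4) f_eq
      dom_act[OF a(1) h_a] cod_act[OF a(1) h_a] b by simp
  ultimately have "a = ide (dm a)"
    using Rm_degree[of a] Rp_degree[of "act h a"] dom_act[OF a(1) h_a] cod_act[OF a(1) h_a]
      ide_if_cod_eq_dom[OF act_in_arr[OF a(1) h_a]] by fastforce
  then show ?thesis using a by simp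
qed

lemma total_iso_iff: "cat_iso T (a, g) \<longleftrightarrow> a \<in> arr \<and> a = ide (dm a) \<and> g \<in> carrier (G (dm a))"
  using total_iso_imp_ide total_iso_ide by (metis dom_in_obj)

lemma total_cmp_embed:
  assumes "m \<in> arr" "p \<in> arr" "dm p = cd m" "g \<in> carrier (G (dm m))"
  shows "c_comp T (p, \<one>\<^bsub>G (dm p)\<^esub>) (m, g) = (cmp p m, g)"
proof -
  interpret grp: group "G (dm m)" using group_G assms by simp
  show ?thesis using assms act_one res_one by simp
qed

definition total_lift :: "'m set \<Rightarrow> ('m \<times> 'g) set" where
  "total_lift S = {(a, g). a \<in> S \<and> g \<in> carrier (G (dm a))}"

lemma total_lift_mem [simp]: "(a, g) \<in> total_lift S \<longleftrightarrow> a \<in> S \<and> g \<in> carrier (G (dm a))"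
  by (simp add: total_lift_def)

lemma wide_subcat_total_lift:
  assumes S: "wide_subcat R S"
    and act_S: "\<And>a g. a \<in> S \<Longrightarrow> g \<in> carrier (G (cd a)) \<Longrightarrow> act g a \<in> S"
  shows "wide_subcat T (total_lift S)"
  unfolding wide_subcat_def
proof (intro conjI ballI impI)
  show "total_lift S \<subseteq> c_arr T"
    using S by (auto simp: wide_subcat_def total_lift_def)
  fix x assume "x \<in> c_obj T"
  then show "c_id T x \<in> total_lift S"
    using S by (simp add: wide_subcat_def)
next
  fix f g assume "f \<in> total_lift S" "g \<in> total_lift S" "c_dom T g = c_cod T f"
  moreover obtain b y where "f = (b, y)" by force
  moreover obtain a x where "g = (a, x)" by force
  ultimately have f: "f = (b, y)" "b \<in> S" "y \<in> carrier (G (dm b))"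
    and g: "g = (a, x)" "a \<in> S" "x \<in> carrier (G (dm a))" and ab: "dm a = cd b"
    by auto
  have arr: "a \<in> arr" "b \<in> arr" and x_b: "x \<in> carrier (G (cd b))"
    using S f g ab by (auto simp: wide_subcat_def)
  have "cmp a (act x b) \<in> S"
    using S act_S[OF f(2) x_b] cod_act[OF arr(2) x_b] g(2) ab by (simp add: wide_subcat_def)
  moreover have "c_comp T g f \<in> c_arr T"
    using total_cmp_in_arr[OF arr(1) g(3) arr(2) f(3) ab] f g by simp
  ultimately show "c_comp T g f \<in> total_lift S"
    using f g by simp
qed

lemma total_lift_Rp_degree:
  "f \<in> total_lift Rp \<Longrightarrow> \<not> cat_iso T f \<Longrightarrow> d (c_dom T f) < d (c_cod T f)"
  and total_lift_Rm_degree: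
  "f \<in> total_lift Rm \<Longrightarrow> \<not> cat_iso T f \<Longrightarrow> d (c_cod T f) < d (c_dom T f)"
  using Rp_degree Rm_degree Rp_in_arr Rm_in_arr by (auto simp: total_iso_iff total_lift_def)

lemma total_iso_degree: "cat_iso T f \<Longrightarrow> d (c_dom T f) = d (c_cod T f)"
  by (cases f) (metis total_cod total_dom total_iso_iff ide_if_cod_eq_dom)

lemma total_lift_inter: "total_lift Rp \<inter> total_lift Rm = {f. cat_iso T f}"
proof (intro equalityI subsetI)
  fix f assume "f \<in> total_lift Rp \<inter> total_lift Rm"
  then show "f \<in> {f. cat_iso T f}"
    using Rp_Rm_is_ide Rp_in_arr by (cases f) (auto simp: total_iso_iff)
next
  fix f assume "f \<in> {f. cat_iso T f}"
  then obtain a g where "f = (a, g)" "a \<in> arr" "a = ide (dm a)" "g \<in> carrier (G (dm a))"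
    by (cases f) (auto simp: total_iso_iff)
  then show "f \<in> total_lift Rp \<inter> total_lift Rm"
    using ide_in_Rp ide_in_Rm dom_in_obj by (metis IntI total_lift_mem)
qed

lemma total_factorization_exists:
  assumes "f \<in> c_arr T"
  shows "\<exists>g h. g \<in> total_lift Rp \<and> h \<in> total_lift Rm \<and> c_dom T g = c_cod T h \<and> c_comp T g h = f"
proof -
  obtain a x where f: "f = (a, x)" "a \<in> arr" "x \<in> carrier (G (dm a))"
    using assms by (cases f) auto
  obtain m p where mp: "m \<in> Rm" "p \<in> Rp" "dm p = cd m" "cmp p m = a"
    using factorization_exists[OF f(2)] by blast
  have arr: "m \<in> arr" "p \<in> arr"
    using mp Rm_in_arr Rp_in_arr by auto
  have "dm a = dm m"
    using mp arr by auto
  then have "(p, \<one>\<^bsub>G (dm p)\<^esub>) \<in> total_lift Rp" "(m, x) \<in> total_lift Rm"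
    "c_comp T (p, \<one>\<^bsub>G (dm p)\<^esub>) (m, x) = f"
    using mp arr f total_cmp_embed by simp_all
  then show ?thesis
    using mp(3) by fastforce
qed

lemma total_cmp_comparison_iso:
  assumes \<eta>: "\<eta> \<in> arr" "y \<in> carrier (G (dm \<eta>))" and \<eta>': "\<eta>' \<in> arr" "y' \<in> carrier (G (dm \<eta>'))"
    and x_\<eta>: "x \<in> carrier (G (cd \<eta>))" and x'_\<eta>': "x' \<in> carrier (G (cd \<eta>'))"
    and act_eq: "act x \<eta> = act x' \<eta>'"
    and res_eq: "res \<eta> x \<otimes>\<^bsub>G (dm \<eta>)\<^esub> y = res \<eta>' x' \<otimes>\<^bsub>G (dm \<eta>')\<^esub> y'"
  shows "c_comp T (ide (cd \<eta>), inv\<^bsub>G (cd \<eta>)\<^esub> x' \<otimes>\<^bsub>G (cd \<eta>)\<^esub> x) (\<eta>, y) = (\<eta>', y')"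
proof -
  obtain s where cd_\<eta>: "cd \<eta> = s" by blast
  have cd_\<eta>': "cd \<eta>' = s" and dm_\<eta>': "dm \<eta>' = dm \<eta>"
    using act_eq dom_act cod_act \<eta>(1) \<eta>'(1) x_\<eta> x'_\<eta>' cd_\<eta> by metis+
  interpret cod: group "G s" using group_G \<eta>(1) cd_\<eta> by auto
  interpret dom: group "G (dm \<eta>)" using group_G \<eta>(1) by simp
  have x: "x \<in> carrier (G s)" and x': "x' \<in> carrier (G s)"
    using x_\<eta> x'_\<eta>' cd_\<eta> cd_\<eta>' by simp_all
  define k where "k = inv\<^bsub>G s\<^esub> x' \<otimes>\<^bsub>G s\<^esub> x"
  have "act k \<eta> = act (inv\<^bsub>G s\<^esub> x') (act x' \<eta>')"
    using act_mult[OF \<eta>(1), unfolded cd_\<eta>] x x' act_eq k_def by simp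
  also have "\<dots> = act (inv\<^bsub>G s\<^esub> x' \<otimes>\<^bsub>G s\<^esub> x') \<eta>'"
    by (rule act_mult[OF \<eta>'(1), unfolded cd_\<eta>', symmetric]) (use x' in simp_all)
  also have "\<dots> = \<eta>'"
    using act_one[OF \<eta>'(1), unfolded cd_\<eta>'] x' by simp
  finally have act_k: "act k \<eta> = \<eta>'" .
  have rx: "res \<eta> x \<in> carrier (G (dm \<eta>))" and rx': "res \<eta>' x' \<in> carrier (G (dm \<eta>))"
    using res_closed[OF \<eta>(1) x_\<eta>] res_closed[OF \<eta>'(1) x'_\<eta>'] dm_\<eta>' by simp_all
  have "res \<eta> k = res (act x' \<eta>') (inv\<^bsub>G s\<^esub> x') \<otimes>\<^bsub>G (dm \<eta>)\<^esub> res \<eta> x"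
    using res_mult[OF \<eta>(1), unfolded cd_\<eta>] act_eq x x' k_def by simp
  also have "\<dots> = inv\<^bsub>G (dm \<eta>)\<^esub> (res \<eta>' x') \<otimes>\<^bsub>G (dm \<eta>)\<^esub> res \<eta> x"
    using res_inv[OF \<eta>'(1) x'_\<eta>', unfolded cd_\<eta>' dm_\<eta>'] by simp
  finally have "res \<eta> k \<otimes>\<^bsub>G (dm \<eta>)\<^esub> y = y'"
    using res_eq rx rx' \<eta>(2) \<eta>'(2) dm_\<eta>' by (simp add: dom.m_assoc flip: dom.m_assoc[of _ _ y'])
  then show ?thesis
    using act_k cmp_ide_left[OF \<eta>'(1)] cd_\<eta> cd_\<eta>' k_def by simp
qed

text \<open>Both factorizations have the same \<open>R\<^sup>+\<close>-part, by uniqueness of Reedy factorizations in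
  \<open>R\<close> applied to \<open>\<gamma> \<circ> x\<^sub>*(\<eta>) = \<gamma>' \<circ> x'\<^sub>*(\<eta>')\<close>; the comparison isomorphism is
  \<open>(1, x'\<^sup>-\<^sup>1 x)\<close>.\<close>
lemma total_factorization_unique:
  assumes \<gamma>: "\<gamma> \<in> Rp" "x \<in> carrier (G (dm \<gamma>))" and \<eta>: "\<eta> \<in> Rm" "y \<in> carrier (G (dm \<eta>))"
    and \<gamma>': "\<gamma>' \<in> Rp" "x' \<in> carrier (G (dm \<gamma>'))" and \<eta>': "\<eta>' \<in> Rm" "y' \<in> carrier (G (dm \<eta>'))"
    and \<gamma>\<eta>: "dm \<gamma> = cd \<eta>" and \<gamma>\<eta>': "dm \<gamma>' = cd \<eta>'"
    and eq: "c_comp T (\<gamma>, x) (\<eta>, y) = c_comp T (\<gamma>', x') (\<eta>', y')"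
  shows "\<exists>\<theta>. cat_iso T \<theta> \<and> c_dom T \<theta> = cd \<eta> \<and> c_cod T \<theta> = cd \<eta>' \<and>
    c_comp T \<theta> (\<eta>, y) = (\<eta>', y') \<and> c_comp T (\<gamma>', x') \<theta> = (\<gamma>, x)"
proof -
  have arr: "\<gamma> \<in> arr" "\<eta> \<in> arr" "\<gamma>' \<in> arr" "\<eta>' \<in> arr"
    using \<gamma> \<eta> \<gamma>' \<eta>' Rp_in_arr Rm_in_arr by auto
  have x: "x \<in> carrier (G (cd \<eta>))" and x': "x' \<in> carrier (G (cd \<eta>'))"
    using \<gamma>(2) \<gamma>'(2) \<gamma>\<eta> \<gamma>\<eta>' by simp_all
  have "cmp \<gamma> (act x \<eta>) = cmp \<gamma>' (act x' \<eta>')"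
    using eq by simp
  then have act_eq: "act x \<eta> = act x' \<eta>'" and "\<gamma> = \<gamma>'"
    using factorization_unique[OF act_Rm[OF \<eta>(1) x] \<gamma>(1) _ act_Rm[OF \<eta>'(1) x'] \<gamma>'(1)]
      cod_act[OF arr(2) x] cod_act[OF arr(4) x'] \<gamma>\<eta> \<gamma>\<eta>' by auto
  obtain s where cd_\<eta>: "cd \<eta> = s" and cd_\<eta>': "cd \<eta>' = s"
    using act_eq cod_act arr x x' by metis
  have s: "s \<in> obj" using arr cd_\<eta> by auto
  interpret cod: group "G s" using group_G s by simp
  define k where "k = inv\<^bsub>G s\<^esub> x' \<otimes>\<^bsub>G s\<^esub> x"
  have k: "k \<in> carrier (G s)" using x x' cd_\<eta> cd_\<eta>' k_def by simp
  have "c_comp T (ide s, k) (\<eta>, y) = (\<eta>', y')"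
    using total_cmp_comparison_iso[OF arr(2) \<eta>(2) arr(4) \<eta>'(2) x x' act_eq] eq cd_\<eta> k_def
    by simp
  moreover have "c_comp T (\<gamma>', x') (ide s, k) = (\<gamma>, x)"
    using act_ide[OF s] res_ide[OF s] cmp_ide_right[OF arr(3)] s \<gamma>\<eta>' cd_\<eta> cd_\<eta>' \<open>\<gamma> = \<gamma>'\<close> x x' k_def
    by (simp flip: cod.m_assoc)
  ultimately show ?thesis
    using total_iso_ide[OF s k] s cd_\<eta> cd_\<eta>' by (intro exI[of _ "(ide s, k)"]) simp
qed

lemma total_lift_Rm_iso_fix:
  assumes "cat_iso T \<theta>" "f \<in> total_lift Rm" "c_dom T \<theta> = c_cod T f" "c_comp T \<theta> f = f"
  shows "\<theta> = c_id T (c_dom T \<theta>)"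
proof -
  obtain c k where \<theta>: "\<theta> = (c, k)" by force
  obtain a g where f: "f = (a, g)" "a \<in> Rm" "g \<in> carrier (G (dm a))"
    using assms(2) by (cases f) auto
  have c: "c \<in> arr" "c = ide (dm c)" "k \<in> carrier (G (dm c))"
    using assms(1) \<theta> total_iso_iff by auto
  have a: "a \<in> arr" using f Rm_in_arr by simp
  have c_eq: "c = ide (cd a)"
    using c(2) assms(3) \<theta> f by simp
  have k: "k \<in> carrier (G (cd a))"
    using c(3) c_eq a by simp
  interpret grp: group "G (dm a)" using group_G a by simp
  have "cmp c (act k a) = a" "res a k \<otimes>\<^bsub>G (dm a)\<^esub> g = g"
    using assms(4) \<theta> f by simp_all
  moreover have "cmp c (act k a) = act k a"
    using cmp_ide_left[OF act_in_arr[OF a k]] cod_act[OF a k] c_eq by simp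
  moreover have "res a k \<in> carrier (G (dm a))"
    by (rule res_closed[OF a k])
  ultimately have "act k a = a" "res a k = \<one>\<^bsub>G (dm a)\<^esub>"
    using f(3) grp.r_cancel_one by auto
  then have "k = \<one>\<^bsub>G (cd a)\<^esub>"
    using Rm_stabilizer_trivial[OF f(2) k] by simp
  then show ?thesis
    using \<theta> c_eq a by simp
qed

lemma total_lift_Rp_iso_fix:
  assumes "cat_iso T \<theta>" "f \<in> total_lift Rp" "c_cod T \<theta> = c_dom T f" "c_comp T f \<theta> = f"
  shows "\<theta> = c_id T (c_dom T \<theta>)"
proof -
  obtain c k where \<theta>: "\<theta> = (c, k)" by force
  obtain a g where f: "f = (a, g)" "a \<in> Rp" "g \<in> carrier (G (dm a))"
    using assms(2) by (cases f) auto
  have c: "c \<in> arr" "c = ide (dm c)" "k \<in> carrier (G (dm c))"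
    using assms(1) \<theta> total_iso_iff by auto
  have a: "a \<in> arr" using f Rp_in_arr by simp
  have c_eq: "c = ide (dm a)"
    using c(2) ide_if_cod_eq_dom[OF c(1,2)] assms(3) \<theta> f by (metis total_cod total_dom)
  interpret grp: group "G (dm a)" using group_G a by simp
  have "res c g \<otimes>\<^bsub>G (dm a)\<^esub> k = g"
    using assms(4) \<theta> f c_eq a by simp
  moreover have "res c g = g"
    using res_ide[OF dom_in_obj[OF a] f(3)] c_eq by simp
  moreover have "k \<in> carrier (G (dm a))"
    using c(3) c_eq a by simp
  ultimately have "k = \<one>\<^bsub>G (dm a)\<^esub>"
    using f(3) grp.l_cancel_one by auto
  then show ?thesis
    using \<theta> c_eq a by simp
qed

lemma total_dualizable_gen_reedy: "dualizable_gen_reedy T (total_lift Rp) (total_lift Rm) d"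
  unfolding dualizable_gen_reedy_def gen_reedy_def
proof (intro conjI allI impI ballI)
  show "is_category T" by (rule total_is_category)
  show "wide_subcat T (total_lift Rp)"
    using wide_subcat_total_lift[OF wide_subcat_Rp act_Rp] .
  show "wide_subcat T (total_lift Rm)"
    using wide_subcat_total_lift[OF wide_subcat_Rm act_Rm] .
  show "total_lift Rp \<inter> total_lift Rm = {f. cat_iso T f}"
    by (rule total_lift_inter)
  show "\<And>f. f \<in> c_arr T \<Longrightarrow>
      \<exists>g h. g \<in> total_lift Rp \<and> h \<in> total_lift Rm \<and> c_dom T g = c_cod T h \<and> c_comp T g h = f"
    by (rule total_factorization_exists)
next
  fix g h g' h'
  assume "g \<in> total_lift Rp" "h \<in> total_lift Rm" "g' \<in> total_lift Rp" "h' \<in> total_lift Rm"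
    "c_dom T g = c_cod T h" "c_dom T g' = c_cod T h'" "c_comp T g h = c_comp T g' h'"
  moreover obtain \<gamma> x \<eta> y \<gamma>' x' \<eta>' y' where "g = (\<gamma>, x)" "h = (\<eta>, y)" "g' = (\<gamma>', x')" "h' = (\<eta>', y')"
    by (metis surj_pair)
  ultimately show "\<exists>\<theta>. cat_iso T \<theta> \<and> c_dom T \<theta> = c_cod T h \<and> c_cod T \<theta> = c_cod T h' \<and>
      c_comp T \<theta> h = h' \<and> c_comp T g' \<theta> = g"
    using total_factorization_unique[of \<gamma> x \<eta> y \<gamma>' x' \<eta>' y'] by simp
qed (blast intro: total_lift_Rp_degree total_lift_Rm_degree total_iso_degree
  total_lift_Rm_iso_fix total_lift_Rp_iso_fix)+

lemma total_embed_reedy_morphism: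
  "reedy_morphism R Rp Rm d T (total_lift Rp) (total_lift Rm) d (\<lambda>r. r) (total_embed R G)"
  unfolding reedy_morphism_def is_functor_def total_embed_def
  using Rp_in_arr Rm_in_arr act_one res_one by auto

lemma total_reedy_structure_unique:
  assumes reedy: "gen_reedy T P M d'"
    and mor: "reedy_morphism R Rp Rm d T P M d' (\<lambda>r. r) (total_embed R G)"
  shows "P = total_lift Rp \<and> M = total_lift Rm \<and> (\<forall>r\<in>obj. d' r = d r)"
proof -
  have wide: "wide_subcat T P" "wide_subcat T M" and iso: "P \<inter> M = {f. cat_iso T f}"
    using reedy by (simp_all add: gen_reedy_def)
  have embed: "\<And>a. a \<in> Rp \<Longrightarrow> (a, \<one>\<^bsub>G (dm a)\<^esub>) \<in> P" "\<And>a. a \<in> Rm \<Longrightarrow> (a, \<one>\<^bsub>G (dm a)\<^esub>) \<in> M"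
    using mor unfolding reedy_morphism_def total_embed_def by blast+
  have lift_subset: "total_lift S \<subseteq> Q"
    if S: "S \<subseteq> arr" and Q: "wide_subcat T Q" "\<And>f. cat_iso T f \<Longrightarrow> f \<in> Q"
      and embed_Q: "\<And>a. a \<in> S \<Longrightarrow> (a, \<one>\<^bsub>G (dm a)\<^esub>) \<in> Q" for S Q
  proof
    fix f assume "f \<in> total_lift S"
    then obtain a g where f: "f = (a, g)" "a \<in> S" "g \<in> carrier (G (dm a))"
      by (cases f) auto
    have Q_cmp: "\<And>f g. f \<in> Q \<Longrightarrow> g \<in> Q \<Longrightarrow> c_dom T g = c_cod T f \<Longrightarrow> c_comp T g f \<in> Q"
      using Q(1) unfolding wide_subcat_def by blast
    have a: "a \<in> arr" using S f by blast
    then have "c_dom T (a, \<one>\<^bsub>G (dm a)\<^esub>) = c_cod T (ide (dm a), g)"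
      by simp
    then have "c_comp T (a, \<one>\<^bsub>G (dm a)\<^esub>) (ide (dm a), g) \<in> Q"
      by (rule Q_cmp[OF Q(2)[OF total_iso_ide[OF dom_in_obj[OF a] f(3)]] embed_Q[OF f(2)]])
    moreover have "c_comp T (a, \<one>\<^bsub>G (dm a)\<^esub>) (ide (dm a), g) = f"
      using total_cmp_embed[of "ide (dm a)" a g] a f by simp
    ultimately show "f \<in> Q"
      by (simp only:)
  qed
  have "total_lift Rp \<subseteq> P"
    by (rule lift_subset[OF _ wide(1) _ embed(1)]) (use Rp_in_arr iso in blast)+
  moreover have "total_lift Rm \<subseteq> M"
    by (rule lift_subset[OF _ wide(2) _ embed(2)]) (use Rm_in_arr iso in blast)+
  moreover have "gen_reedy T (total_lift Rp) (total_lift Rm) d"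
    using total_dualizable_gen_reedy by (simp add: dualizable_gen_reedy_def)
  ultimately have "P = total_lift Rp \<and> M = total_lift Rm"
    using gen_reedy_eq_if_subset[OF _ reedy] by blast
  moreover have "\<forall>r\<in>obj. d' r = d r"
    using mor by (simp add: reedy_morphism_def)
  ultimately show ?thesis by blast
qed

end

theorem proposition2p10:
  fixes R :: "('o, 'm) cat" and Rp Rm :: "'m set" and d :: "'o \<Rightarrow> nat"
    and G :: "'o \<Rightarrow> 'g monoid" and res :: "'m \<Rightarrow> 'g \<Rightarrow> 'g" and act :: "'g \<Rightarrow> 'm \<Rightarrow> 'm"
  assumes "strict_reedy R Rp Rm d"
    and "crossed_group R G res act"
    and "reedy_compatible R Rp Rm G res act"
  shows "(\<exists>P M d'. dualizable_gen_reedy (total_cat R G res act) P M d' \<and>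
            reedy_morphism R Rp Rm d (total_cat R G res act) P M d' (\<lambda>r. r) (total_embed R G))
       \<and> (\<forall>P1 M1 d1 P2 M2 d2.
            dualizable_gen_reedy (total_cat R G res act) P1 M1 d1 \<and>
            reedy_morphism R Rp Rm d (total_cat R G res act) P1 M1 d1 (\<lambda>r. r) (total_embed R G) \<and>
            dualizable_gen_reedy (total_cat R G res act) P2 M2 d2 \<and>
            reedy_morphism R Rp Rm d (total_cat R G res act) P2 M2 d2 (\<lambda>r. r) (total_embed R G)
            \<longrightarrow> P1 = P2 \<and> M1 = M2 \<and> (\<forall>r\<in>c_obj R. d1 r = d2 r))"
proof -
  interpret compatible_crossed_group R Rp Rm d G res act
    by unfold_locales (fact assms)+
  have unique: "P = total_lift Rp \<and> M = total_lift Rm \<and> (\<forall>r\<in>obj. d' r = d r)"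
    if "dualizable_gen_reedy T P M d'"
      and "reedy_morphism R Rp Rm d T P M d' (\<lambda>r. r) (total_embed R G)" for P M d'
    using total_reedy_structure_unique that unfolding dualizable_gen_reedy_def by blast
  have "\<exists>P M d'. dualizable_gen_reedy T P M d' \<and>
      reedy_morphism R Rp Rm d T P M d' (\<lambda>r. r) (total_embed R G)"
    using total_dualizable_gen_reedy total_embed_reedy_morphism by blast
  moreover have "P1 = P2 \<and> M1 = M2 \<and> (\<forall>r\<in>obj. d1 r = d2 r)"
    if "dualizable_gen_reedy T P1 M1 d1 \<and>
      reedy_morphism R Rp Rm d T P1 M1 d1 (\<lambda>r. r) (total_embed R G) \<and>
      dualizable_gen_reedy T P2 M2 d2 \<and>
      reedy_morphism R Rp Rm d T P2 M2 d2 (\<lambda>r. r) (total_embed R G)" for P1 M1 d1 P2 M2 d2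
    using unique[of P1 M1 d1] unique[of P2 M2 d2] that by simp
  ultimately show ?thesis by blast
qed

end
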